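(* Let $m,n,c$ be positive integers such that $c\equiv0\pmod4$, $m\equiv n\equiv1\pmod4$, and $m,n\geqslant9$. Then there exists an $\mathrm{IHS}(m,n;c)$.
   Context: An integer Heffter array set $\mathrm{IHS}(m,n;c)$ is a collection of $c$ completely filled $m\times n$ arrays with integer entries such that the absolute values of all $mnc$ entries (taken over all $c$ arrays) are exactly $1,2,\ldots,mnc$, each occurring exactly once, and in every array the entries of each row and of each column sum to $0$. *)

theory Defs
  imports Main
begin

definition IHS :: "nat \<Rightarrow> nat \<Rightarrow> nat \<Rightarrow> (nat \<Rightarrow> nat \<Rightarrow> nat \<Rightarrow> int) \<Rightarrow> bool" where
  "IHS m n c A \<longleftrightarrow>
     bij_betw (\<lambda>(k, i, j). \<bar>A k i j\<bar>) ({..<c} \<times> {..<m} \<times> {..<n}) {1..int (m * n * c)}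
   \<and> (\<forall>k<c. \<forall>i<m. (\<Sum>j<n. A k i j) = 0)
   \<and> (\<forall>k<c. \<forall>j<n. (\<Sum>i<m. A k i j) = 0)"

end

(*
  Every array is tiled by blocks: a corner of size 9 or 13 in each direction, strips of width 8
  along the first rows and columns, and 8 x 8 blocks elsewhere.  Each block is a fixed table of
  cells.  A quad cell carries an entry +-(b + v), 1 <= v <= 4, and in every line of a block each
  quad base b occurs with cancelling signs.  A triple cell carries +-(5 P + v), 1 <= v <= 5, where
  the positions P come in triples (P0, P1, P2) with P2 = P0 + P1 + 1, and in every line the three
  members of a triple occur with signs e, e, -e; the resulting defect 5 e is exactly balanced by
  the offsets v.  So every row and column sums to zero whatever the bases are.

  The bases are then chosen to make the magnitudes a permutation of 1..mnc.  With T triples per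
  array and s = cT/4, a Skolem sequence of order 4s (pairs a_d, a_d + d partitioning 1..8s) gives
  the triples (g, 4s + a - 1, 4s + a + g), a = a_(g+1), which partition 0..12s-1; so the triple
  cells of all c arrays cover 1..60s = 15cT, and the quad cells cover the rest up to mnc.
*)
theory Submission
  imports Defs
begin

section \<open>Balanced lines\<close>

text \<open>A cell \<open>(t, x, s, v)\<close> stands for the entry \<open>s * (B t x + v)\<close>, where \<open>B\<close> assigns bases to
  the slots: kind \<open>t = 0\<close> are triple slots (slots \<open>3u, 3u + 1, 3u + 2\<close> form the \<open>u\<close>-th triple),
  kind \<open>t = 1\<close> are quad slots.\<close>

type_synonym cell = "nat \<times> nat \<times> int \<times> nat"

definition net_sign :: "cell list \<Rightarrow> nat \<Rightarrow> nat \<Rightarrow> int" where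
  "net_sign L t x = (\<Sum>(t', x', s, v) \<leftarrow> L. if t' = t \<and> x' = x then s else 0)"

definition balanced_line :: "nat \<Rightarrow> cell list \<Rightarrow> bool" where
  "balanced_line k L \<longleftrightarrow>
     (\<Sum>(t, x, s, v) \<leftarrow> L. s * int v) = 5 * (\<Sum>u \<leftarrow> [0..<k]. net_sign L 0 (3 * u))
   \<and> (\<forall>u \<in> set [0..<k]. net_sign L 0 (3 * u + 1) = net_sign L 0 (3 * u)
                 \<and> net_sign L 0 (3 * u + 2) = - net_sign L 0 (3 * u))
   \<and> (\<forall>(t, x, s, v) \<in> set L. t = 0 \<and> x < 3 * k \<or> t = 1 \<and> net_sign L 1 x = 0)"

definition cell_value :: "(nat \<Rightarrow> nat \<Rightarrow> nat) \<Rightarrow> cell \<Rightarrow> int" where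
  "cell_value B = (\<lambda>(t, x, s, v). s * int (B t x + v))"

lemma sum_list_kind_eq_sum_net_sign:
  fixes B :: "nat \<Rightarrow> int"
  assumes "finite X" and "\<forall>(t, x, s, v) \<in> set L. t = t0 \<longrightarrow> x \<in> X"
  shows "(\<Sum>(t, x, s, v) \<leftarrow> L. if t = t0 then s * B x else 0) = (\<Sum>x\<in>X. B x * net_sign L t0 x)"
  using assms(2)
proof (induction L)
  case Nil
  show ?case by (simp add: net_sign_def)
next
  case (Cons e L)
  obtain t x s v where e: "e = (t, x, s, v)" by (cases e)
  have "(\<Sum>y\<in>X. B y * net_sign (e # L) t0 y)
      = (\<Sum>y\<in>X. if t = t0 \<and> x = y then s * B y else 0) + (\<Sum>y\<in>X. B y * net_sign L t0 y)"
    by (simp add: e net_sign_def distrib_left sum.distrib mult.commute if_distrib[of "(*) _"] cong: if_cong)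
  also have "(\<Sum>y\<in>X. if t = t0 \<and> x = y then s * B y else 0) = (if t = t0 then s * B x else 0)"
    using Cons.prems assms(1) by (auto simp: e)
  finally show ?case
    using Cons by (simp add: e)
qed

lemma balanced_line_sum_eq_0:
  assumes "balanced_line k L"
    and triple: "\<And>u. B 0 (3 * u + 2) = B 0 (3 * u) + B 0 (3 * u + 1) + 5"
  shows "(\<Sum>e \<leftarrow> L. cell_value B e) = 0"
proof -
  let ?net = "net_sign L"
  have offsets: "(\<Sum>(t, x, s, v) \<leftarrow> L. s * int v) = 5 * (\<Sum>u<k. ?net 0 (3 * u))"
    and signs: "\<And>u. u < k \<Longrightarrow> ?net 0 (3 * u + 1) = ?net 0 (3 * u) \<and> ?net 0 (3 * u + 2) = - ?net 0 (3 * u)"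
    and kinds: "\<forall>(t, x, s, v) \<in> set L. t = 0 \<and> x < 3 * k \<or> t = 1 \<and> ?net 1 x = 0"
    using assms(1) unfolding balanced_line_def
    by (auto simp: interv_sum_list_conv_sum_set_nat atLeast0LessThan)
  define Q where "Q = {x. \<exists>s v. (1, x, s, v) \<in> set L}"
  have "finite Q"
    by (rule finite_subset[of _ "(\<lambda>(t, x, s, v). x) ` set L"]) (force simp: Q_def)+
  have "(\<Sum>e \<leftarrow> L. cell_value B e) = (\<Sum>(t, x, s, v) \<leftarrow> L. s * int v)
      + (\<Sum>(t, x, s, v) \<leftarrow> L. if t = 0 then s * int (B 0 x) else 0)
      + (\<Sum>(t, x, s, v) \<leftarrow> L. if t = 1 then s * int (B 1 x) else 0)"
  proof -
    have "\<forall>(t, x, s, v) \<in> set L. t = 0 \<or> t = 1" using kinds by auto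
    then show ?thesis by (induction L) (auto simp: cell_value_def algebra_simps)
  qed
  also have "(\<Sum>(t, x, s, v) \<leftarrow> L. if t = 0 then s * int (B 0 x) else 0)
      = (\<Sum>x<3 * k. int (B 0 x) * ?net 0 x)"
    by (rule sum_list_kind_eq_sum_net_sign) (use kinds in auto)
  also have "\<dots> = (\<Sum>u<k. - 5 * ?net 0 (3 * u))"
    unfolding sum.nat_group[of _ 3 k, symmetric, simplified mult.commute[of _ 3]]
  proof (rule sum.cong)
    fix u assume "u \<in> {..<k}"
    with signs triple[of u] show "(\<Sum>x\<in>{3 * u..<3 * u + 3}. int (B 0 x) * ?net 0 x) = - 5 * ?net 0 (3 * u)"
      by (simp add: numeral_eq_Suc algebra_simps)
  qed simp
  also have "(\<Sum>(t, x, s, v) \<leftarrow> L. if t = 1 then s * int (B 1 x) else 0) = (\<Sum>x\<in>Q. int (B 1 x) * ?net 1 x)"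
    by (rule sum_list_kind_eq_sum_net_sign[OF \<open>finite Q\<close>]) (auto simp: Q_def)
  also have "\<dots> = 0"
    using kinds by (auto simp: Q_def intro!: sum.neutral)
  finally show ?thesis
    using offsets by (simp add: sum_negf sum_distrib_left)
qed

lemma sum_balanced_line_eq_0:
  assumes "balanced_line k L" and "length L = N" and "\<And>y. y < N \<Longrightarrow> f y = cell_value B (L ! y)"
    and "\<And>u. B 0 (3 * u + 2) = B 0 (3 * u) + B 0 (3 * u + 1) + 5"
  shows "(\<Sum>y<N. f y) = 0"
proof -
  have "(\<Sum>y<N. f y) = (\<Sum>e \<leftarrow> L. cell_value B e)"
    using assms(2,3) by (simp add: sum_list_sum_nth atLeast0LessThan)
  also have "\<dots> = 0" using assms(1,4) by (rule balanced_line_sum_eq_0)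
  finally show ?thesis .
qed

section \<open>A Skolem sequence and the triple positions\<close>

text \<open>A Skolem sequence of order \<open>4 s\<close> for \<open>s \<ge> 2\<close>: position \<open>x \<in> {1..8 s}\<close> holds \<open>(d, j)\<close> when it
  is the first (\<open>j = 0\<close>) or second (\<open>j = 1\<close>) occurrence of \<open>d\<close>; the two occurrences of \<open>d\<close> are
  \<open>d\<close> apart, and \<open>skolem_first s d\<close> is the first one.\<close>

definition skolem :: "nat \<Rightarrow> nat \<Rightarrow> nat \<times> nat" where
  "skolem s x =
    (if x \<le> s - 1 then (4*s - 1 - 2*x, 0)
     else if x = s then (1, 0)
     else if x = s + 1 then (1, 1)
     else if x \<le> 2*s - 1 then (4*s + 1 - 2*x, 0)
     else if x = 2*s then (2*s - 1, 0)
     else if x = 2*s + 1 then (4*s - 1, 0)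
     else if x \<le> 3*s - 1 then (2*x - 4*s - 1, 1)
     else if x \<le> 4*s - 2 then (2*x - 4*s + 1, 1)
     else if x = 4*s - 1 then (2*s - 1, 1)
     else if x \<le> 6*s - 1 then (12*s - 2*x, 0)
     else if x = 6*s then (4*s - 1, 1)
     else (2*x - 12*s, 1))"

definition skolem_first :: "nat \<Rightarrow> nat \<Rightarrow> nat" where
  "skolem_first s d =
    (if even d then 6*s - d div 2
     else if d div 2 = 0 then s
     else if d div 2 \<le> s - 2 then 2*s - d div 2
     else if d div 2 = s - 1 then 2*s
     else if d div 2 \<le> 2*s - 2 then 2*s - 1 - d div 2
     else 2*s + 1)"

lemma skolem_eqs:
  assumes "2 \<le> s"
  shows "x \<le> s - 1 \<Longrightarrow> 2 * x + d + 1 = 4 * s \<Longrightarrow> skolem s x = (d, 0)"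
    and "skolem s s = (1, 0)"
    and "skolem s (s + 1) = (1, 1)"
    and "s + 2 \<le> x \<Longrightarrow> x \<le> 2 * s - 1 \<Longrightarrow> 2 * x + d = 4 * s + 1 \<Longrightarrow> skolem s x = (d, 0)"
    and "skolem s (2 * s) = (2 * s - 1, 0)"
    and "skolem s (2 * s + 1) = (4 * s - 1, 0)"
    and "2 * s + 2 \<le> x \<Longrightarrow> x \<le> 3 * s - 1 \<Longrightarrow> d + 4 * s + 1 = 2 * x \<Longrightarrow> skolem s x = (d, 1)"
    and "3 * s \<le> x \<Longrightarrow> x \<le> 4 * s - 2 \<Longrightarrow> d + 4 * s = 2 * x + 1 \<Longrightarrow> skolem s x = (d, 1)"
    and "skolem s (4 * s - 1) = (2 * s - 1, 1)"
    and "4 * s \<le> x \<Longrightarrow> x \<le> 6 * s - 1 \<Longrightarrow> 2 * x + d = 12 * s \<Longrightarrow> skolem s x = (d, 0)"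
    and "skolem s (6 * s) = (4 * s - 1, 1)"
    and "6 * s + 1 \<le> x \<Longrightarrow> d + 12 * s = 2 * x \<Longrightarrow> skolem s x = (d, 1)"
  using assms unfolding skolem_def
  by (((subst if_not_P, linarith)+)?, (simp; (arith)?))+

lemma skolem_first_eqs:
  assumes "2 \<le> s"
  shows "d = 2 * e \<Longrightarrow> skolem_first s d = 6 * s - e"
    and "d = 2 * e + 1 \<Longrightarrow> e = 0 \<Longrightarrow> skolem_first s d = s"
    and "d = 2 * e + 1 \<Longrightarrow> 1 \<le> e \<Longrightarrow> e \<le> s - 2 \<Longrightarrow> skolem_first s d = 2 * s - e"
    and "d = 2 * e + 1 \<Longrightarrow> e = s - 1 \<Longrightarrow> skolem_first s d = 2 * s"
    and "d = 2 * e + 1 \<Longrightarrow> s \<le> e \<Longrightarrow> e \<le> 2 * s - 2 \<Longrightarrow> skolem_first s d = 2 * s - 1 - e"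
    and "d = 2 * e + 1 \<Longrightarrow> e = 2 * s - 1 \<Longrightarrow> skolem_first s d = 2 * s + 1"
  using assms unfolding skolem_first_def
  by (((subst if_not_P, (simp; linarith))+)?, simp)+

lemma skolem_first_occurrences:
  assumes s: "2 \<le> s" and d: "1 \<le> d" "d \<le> 4 * s"
  shows "skolem s (skolem_first s d) = (d, 0)" and "skolem s (skolem_first s d + d) = (d, 1)"
    and "1 \<le> skolem_first s d" and "skolem_first s d + d \<le> 8 * s"
proof -
  note eqs = skolem_eqs[OF s] and first = skolem_first_eqs[OF s]
  have "skolem s (skolem_first s d) = (d, 0) \<and> skolem s (skolem_first s d + d) = (d, 1)
      \<and> 1 \<le> skolem_first s d \<and> skolem_first s d + d \<le> 8 * s"
  proof (cases "even d")
    case True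
    then obtain e where e: "d = 2 * e" ..
    have a: "skolem_first s d = 6 * s - e" using first(1) e .
    have "6 * s - e + d = 6 * s + e" "1 \<le> 6 * s - e" "6 * s + e \<le> 8 * s" using e d by linarith+
    moreover have "skolem s (6 * s - e) = (d, 0)" by (rule eqs(10)) (use e d s in linarith)+
    moreover have "skolem s (6 * s + e) = (d, 1)" by (rule eqs(12)) (use e d s in simp)+
    ultimately show ?thesis unfolding a by simp
  next
    case False
    then obtain e where e: "d = 2 * e + 1" ..
    consider "e = 0" | "1 \<le> e" "e \<le> s - 2" | "e = s - 1" | "s \<le> e" "e \<le> 2 * s - 2" | "e = 2 * s - 1"
      using d e s by linarith
    then show ?thesis
    proof cases
      case 1
      then show ?thesis using first(2)[OF e] e s eqs(2,3) by simp
    next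
      case 2
      have a: "skolem_first s d = 2 * s - e" using first(3)[OF e 2] .
      have "2 * s - e + d = 2 * s + e + 1" "1 \<le> 2 * s - e" "2 * s + e + 1 \<le> 8 * s" using 2 e by linarith+
      moreover have "skolem s (2 * s - e) = (d, 0)" by (rule eqs(4)) (use 2 e s in linarith)+
      moreover have "skolem s (2 * s + e + 1) = (d, 1)" by (rule eqs(7)) (use 2 e s in \<open>linarith | simp\<close>)+
      ultimately show ?thesis unfolding a by simp
    next
      case 3
      have a: "skolem_first s d = 2 * s" using first(4)[OF e 3] .
      have d': "d = 2 * s - 1" using 3 e s by linarith
      have "2 * s + d = 4 * s - 1" "4 * s - 1 \<le> 8 * s" using d' s by linarith+
      then show ?thesis unfolding a using d' s eqs(5,9) by simp
    next
      case 4
      have a: "skolem_first s d = 2 * s - 1 - e" using first(5)[OF e 4] .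
      have "2 * s - 1 - e + d = 2 * s + e" "1 \<le> 2 * s - 1 - e" "2 * s + e \<le> 8 * s" using 4 e s by linarith+
      moreover have "skolem s (2 * s - 1 - e) = (d, 0)" by (rule eqs(1)) (use 4 e s in linarith)+
      moreover have "skolem s (2 * s + e) = (d, 1)" by (rule eqs(8)) (use 4 e s in \<open>linarith | simp\<close>)+
      ultimately show ?thesis unfolding a by simp
    next
      case 5
      have a: "skolem_first s d = 2 * s + 1" using first(6)[OF e 5] .
      have d': "d = 4 * s - 1" using 5 e s by linarith
      have "2 * s + 1 + d = 6 * s" using d' s by linarith
      then show ?thesis unfolding a using d' s eqs(6,11) by simp
    qed
  qed
  then show "skolem s (skolem_first s d) = (d, 0)" "skolem s (skolem_first s d + d) = (d, 1)"
    "1 \<le> skolem_first s d" "skolem_first s d + d \<le> 8 * s"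
    by auto
qed

text \<open>As \<open>g\<close> ranges over \<open>{..<4 s}\<close>, these triples partition \<open>{..<12 s}\<close>;
  \<open>position_triple\<close> is the inverse.\<close>

definition triple_position :: "nat \<Rightarrow> nat \<Rightarrow> nat \<Rightarrow> nat" where
  "triple_position s g r =
     (if r = 0 then g else 4 * s + skolem_first s (g + 1) - 1 + (if r = 1 then 0 else g + 1))"

definition position_triple :: "nat \<Rightarrow> nat \<Rightarrow> nat \<times> nat" where
  "position_triple s p =
     (if p < 4 * s then (p, 0) else (case skolem s (p + 1 - 4 * s) of (d, j) \<Rightarrow> (d - 1, j + 1)))"

lemma triple_position_sum: "triple_position s g 2 = triple_position s g 0 + triple_position s g 1 + 1"
  by (simp add: triple_position_def)

lemma triple_position_less:
  assumes "2 \<le> s" and "g < 4 * s" and "r < 3"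
  shows "triple_position s g r < 12 * s"
  using skolem_first_occurrences(4)[of s "g + 1"] assms
  by (auto simp: triple_position_def)

lemma position_triple_triple_position:
  assumes "2 \<le> s" and "g < 4 * s" and "r < 3"
  shows "position_triple s (triple_position s g r) = (g, r)"
proof -
  note occ = skolem_first_occurrences[of s "g + 1"]
  consider "r = 0" | "r = 1" | "r = 2" using assms(3) by linarith
  then show ?thesis
    by cases (use assms occ in \<open>auto simp: triple_position_def position_triple_def\<close>)
qed

lemma inj_on_triple_position:
  assumes "2 \<le> s"
  shows "inj_on (\<lambda>(g, r). triple_position s g r) ({..<4 * s} \<times> {..<3})"
  by (rule inj_on_inverseI[where g = "position_triple s"])
    (auto simp: position_triple_triple_position[OF assms])

section \<open>Magnitudes\<close>

lemma mult_add_eq_mult_add_cancel: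
  fixes a a' b q q' :: nat
  assumes "a < b" and "a' < b" and "b * q + a = b * q' + a'"
  shows "q = q'" and "a = a'"
proof -
  have "(b * q + a) div b = (b * q' + a') div b" and "(b * q + a) mod b = (b * q' + a') mod b"
    using assms(3) by simp_all
  then show "q = q'" and "a = a'"
    using assms(1,2) by simp_all
qed

lemma mult_add_less_mult:
  fixes a c k T :: nat
  assumes "k < c" and "a < T"
  shows "k * T + a < c * T"
proof -
  have "k * T + a < Suc k * T" using assms(2) by simp
  also have "\<dots> \<le> c * T" using assms(1) by (intro mult_le_mono1) simp
  finally show ?thesis .
qed

definition base_value :: "nat \<Rightarrow> nat \<Rightarrow> nat \<Rightarrow> nat \<Rightarrow> nat \<Rightarrow> nat \<Rightarrow> nat" where
  "base_value c T R k t w =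
     (if t = 0 then 5 * triple_position (c * T div 4) (k * T + w div 3) (w mod 3)
      else 15 * c * T + 4 * (k * R + w))"

lemma base_value_triple_step:
  "base_value c T R k 0 (3 * a + 2) = base_value c T R k 0 (3 * a) + base_value c T R k 0 (3 * a + 1) + 5"
proof -
  have "(3 * a + 2) div 3 = a" "(3 * a + 2) mod 3 = 2" "(3 * a + 1) div 3 = a" "(3 * a + 1) mod 3 = 1"
    by presburger+
  then show ?thesis using triple_position_sum by (simp add: base_value_def)
qed

definition label_set :: "nat \<Rightarrow> nat \<Rightarrow> nat \<Rightarrow> (nat \<times> nat \<times> nat \<times> nat) set" where
  "label_set c T R = {(k, t, w, v). k < c \<and> (t = 0 \<and> w < 3 * T \<and> v \<in> {1..5} \<or> t = 1 \<and> w < R \<and> v \<in> {1..4})}"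

definition label_value :: "nat \<Rightarrow> nat \<Rightarrow> nat \<Rightarrow> nat \<times> nat \<times> nat \<times> nat \<Rightarrow> nat" where
  "label_value c T R = (\<lambda>(k, t, w, v). base_value c T R k t w + v)"

context
  fixes c T R :: nat
  assumes dvd: "4 dvd c * T" and large: "8 \<le> c * T"
begin

private abbreviation "s \<equiv> c * T div 4"

private lemma s_props: "c * T = 4 * s" "2 \<le> s"
  using dvd large by auto

lemma triple_label_value_le:
  assumes "k < c" "w < 3 * T" "v \<le> 5"
  shows "label_value c T R (k, 0, w, v) \<le> 15 * c * T"
proof -
  have "k * T + w div 3 < 4 * s" using mult_add_less_mult[OF assms(1), of "w div 3" T] assms(2) s_props by simp
  then have "triple_position s (k * T + w div 3) (w mod 3) < 12 * s"
    using triple_position_less s_props by simp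
  then show ?thesis using assms(3) s_props by (simp add: label_value_def base_value_def)
qed

lemma triple_label_value_inj:
  assumes "k1 < c" "w1 < 3 * T" "v1 \<in> {1..5}" "k2 < c" "w2 < 3 * T" "v2 \<in> {1..5}"
    and eq: "label_value c T R (k1, 0, w1, v1) = label_value c T R (k2, 0, w2, v2)"
  shows "k1 = k2 \<and> w1 = w2 \<and> v1 = v2"
proof -
  define g1 where "g1 = k1 * T + w1 div 3"
  define g2 where "g2 = k2 * T + w2 div 3"
  have g: "g1 < 4 * s" "g2 < 4 * s"
    using mult_add_less_mult[OF assms(1), of "w1 div 3" T] mult_add_less_mult[OF assms(4), of "w2 div 3" T]
      assms(2,5) s_props by (simp_all add: g1_def g2_def)
  have lt: "v1 - 1 < 5" "v2 - 1 < 5" using assms(3,6) by auto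
  have "5 * triple_position s g1 (w1 mod 3) + (v1 - 1) = 5 * triple_position s g2 (w2 mod 3) + (v2 - 1)"
    using eq assms(3,6) by (simp add: label_value_def base_value_def g1_def g2_def)
  from mult_add_eq_mult_add_cancel[OF lt this]
  have "triple_position s g1 (w1 mod 3) = triple_position s g2 (w2 mod 3)" and v: "v1 = v2"
    using assms(3,6) by auto
  then have "(g1, w1 mod 3) = (g2, w2 mod 3)"
    using g by (intro inj_onD[OF inj_on_triple_position[OF s_props(2)]]) auto
  then have "g1 = g2" and r: "w1 mod 3 = w2 mod 3" by simp_all
  then have "k1 = k2" and "w1 div 3 = w2 div 3"
    using mult_add_eq_mult_add_cancel[of "w1 div 3" T "w2 div 3" k1 k2] assms(2,5)
    by (simp_all add: g1_def g2_def mult.commute)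
  then show ?thesis using r v by (metis div_mult_mod_eq)
qed

lemma quad_label_value_inj:
  assumes "w1 < R" "v1 \<in> {1..4}" "w2 < R" "v2 \<in> {1..4}"
    and eq: "label_value c T R (k1, 1, w1, v1) = label_value c T R (k2, 1, w2, v2)"
  shows "k1 = k2 \<and> w1 = w2 \<and> v1 = v2"
proof -
  have lt: "v1 - 1 < 4" "v2 - 1 < 4" using assms(2,4) by auto
  have "4 * (R * k1 + w1) + (v1 - 1) = 4 * (R * k2 + w2) + (v2 - 1)"
    using eq assms(2,4) by (simp add: label_value_def base_value_def mult.commute)
  from mult_add_eq_mult_add_cancel[OF lt this]
  have "R * k1 + w1 = R * k2 + w2" and "v1 = v2"
    using assms(2,4) by auto
  then show ?thesis
    using mult_add_eq_mult_add_cancel[of w1 R w2 k1 k2] assms(1,3) by simp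
qed

lemma inj_on_label_value: "inj_on (label_value c T R) (label_set c T R)"
proof (rule inj_onI)
  fix x y assume x: "x \<in> label_set c T R" and y: "y \<in> label_set c T R"
    and eq: "label_value c T R x = label_value c T R y"
  obtain k1 t1 w1 v1 k2 t2 w2 v2 where xy: "x = (k1, t1, w1, v1)" "y = (k2, t2, w2, v2)"
    by (cases x, cases y) auto
  have quad_large: "15 * c * T < label_value c T R (k, 1, w, v)" if "1 \<le> v" for k w v
    using that by (simp add: label_value_def base_value_def)
  consider "t1 = 0" "t2 = 0" | "t1 = 1" "t2 = 1" | "t1 = 0" "t2 = 1" | "t1 = 1" "t2 = 0"
    using x y xy by (auto simp: label_set_def)
  then show "x = y"
  proof cases
    case 1
    then show ?thesis using triple_label_value_inj[of k1 w1 v1 k2 w2 v2] x y eq xy by (simp add: label_set_def)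
  next
    case 2
    then show ?thesis using quad_label_value_inj[of w1 v1 w2 v2 k1 k2] x y eq xy by (simp add: label_set_def)
  next
    case 3
    then show ?thesis
      using triple_label_value_le[of k1 w1 v1] quad_large[of v2 k2 w2] x y eq xy by (auto simp: label_set_def)
  next
    case 4
    then show ?thesis
      using triple_label_value_le[of k2 w2 v2] quad_large[of v1 k1 w1] x y eq xy by (auto simp: label_set_def)
  qed
qed

lemma label_value_range:
  assumes "x \<in> label_set c T R"
  shows "label_value c T R x \<in> {1..15 * c * T + 4 * c * R}"
proof -
  obtain k t w v where x: "x = (k, t, w, v)" by (cases x) auto
  show ?thesis
  proof (cases "t = 0")
    case True
    then show ?thesis using triple_label_value_le[of k w v] assms x
      by (auto simp: label_set_def label_value_def)
  next
    case False
    then have "t = 1" "k < c" "w < R" "v \<le> 4" "1 \<le> v" using assms x by (auto simp: label_set_def)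
    moreover have "k * R + w < c * R" using mult_add_less_mult \<open>k < c\<close> \<open>w < R\<close> by blast
    ultimately show ?thesis using x by (simp add: label_value_def base_value_def)
  qed
qed

end

section \<open>Blocks\<close>

definition admissible_cell :: "nat \<Rightarrow> nat \<Rightarrow> cell \<Rightarrow> bool" where
  "admissible_cell k r = (\<lambda>(t, x, s, v). (s = 1 \<or> s = -1)
     \<and> (t = 0 \<and> x < 3 * k \<and> v \<in> {1..5} \<or> t = 1 \<and> x < r \<and> v \<in> {1..4}))"

definition cell_label :: "cell \<Rightarrow> nat \<times> nat \<times> nat" where
  "cell_label = (\<lambda>(t, x, s, v). (t, x, v))"

definition valid_block :: "nat \<Rightarrow> nat \<Rightarrow> nat \<Rightarrow> nat \<Rightarrow> cell list list \<Rightarrow> bool" where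
  "valid_block k r H W B \<longleftrightarrow> length B = H
     \<and> (\<forall>row \<in> set B. length row = W \<and> balanced_line k row \<and> (\<forall>e \<in> set row. admissible_cell k r e))
     \<and> (\<forall>j \<in> set [0..<W]. balanced_line k (map (\<lambda>row. row ! j) B))
     \<and> distinct (map (\<lambda>(i, j). cell_label (B ! i ! j)) (List.product [0..<H] [0..<W]))"

lemma valid_block_row:
  assumes "valid_block k r H W B" and "i < H"
  shows "balanced_line k (B ! i)" and "length (B ! i) = W"
  using assms nth_mem[of i B] by (auto simp: valid_block_def)

lemma valid_block_column:
  assumes "valid_block k r H W B" and "j < W"
  shows "balanced_line k (map (\<lambda>row. row ! j) B)" and "length B = H"
  using assms by (auto simp: valid_block_def)

lemma valid_block_admissible:
  assumes "valid_block k r H W B" and "i < H" and "j < W"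
  shows "admissible_cell k r (B ! i ! j)"
proof -
  have "B ! i \<in> set B" using assms(1,2) by (simp add: valid_block_def)
  then have "length (B ! i) = W" and "\<forall>e \<in> set (B ! i). admissible_cell k r e"
    using assms(1) by (auto simp: valid_block_def)
  then show ?thesis using assms(3) by simp
qed

lemma valid_block_inj_on_label:
  assumes "valid_block k r H W B"
  shows "inj_on (\<lambda>(i, j). cell_label (B ! i ! j)) ({..<H} \<times> {..<W})"
  using assms by (simp add: valid_block_def distinct_map atLeast0LessThan)

definition block_index :: "nat \<Rightarrow> nat \<Rightarrow> nat" where
  "block_index h x = (if x < h then 0 else (x - h) div 8 + 1)"

definition block_offset :: "nat \<Rightarrow> nat \<Rightarrow> nat" where
  "block_offset h x = (if x < h then x else (x - h) mod 8)"

definition block_start :: "nat \<Rightarrow> nat \<Rightarrow> nat" where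
  "block_start h J = (if J = 0 then 0 else h + 8 * (J - 1))"

definition block_length :: "nat \<Rightarrow> nat \<Rightarrow> nat" where
  "block_length h J = (if J = 0 then h else 8)"

lemma block_index_offset_start:
  assumes "y < block_length h J"
  shows "block_index h (block_start h J + y) = J" and "block_offset h (block_start h J + y) = y"
  using assms by (auto simp: block_index_def block_offset_def block_start_def block_length_def)

lemma block_start_index_offset: "block_start h (block_index h x) + block_offset h x = x"
  by (simp add: block_index_def block_offset_def block_start_def)

lemma block_offset_less: "block_offset h x < block_length h (block_index h x)"
  by (simp add: block_index_def block_offset_def block_length_def)

lemma block_index_le:
  assumes "x < h + 8 * p"
  shows "block_index h x \<le> p"
  using assms by (auto simp: block_index_def less_diff_conv2 div_less_iff_less_mult)

lemma sum_blocks: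
  fixes f :: "nat \<Rightarrow> 'a::comm_monoid_add"
  assumes "n = h + 8 * p"
  shows "(\<Sum>x<n. f x) = (\<Sum>J\<le>p. \<Sum>y<block_length h J. f (block_start h J + y))"
  unfolding assms
proof (induction p)
  case 0
  show ?case by (simp add: block_length_def block_start_def)
next
  case (Suc p)
  have "h + 8 * Suc p = (h + 8 * p) + 8" by simp
  then have "(\<Sum>x<h + 8 * Suc p. f x) = (\<Sum>x<h + 8 * p. f x) + (\<Sum>y<8. f (h + 8 * p + y))"
    by (simp only:) (simp add: sum.lessThan_Suc numeral_eq_Suc add.assoc)
  with Suc.IH show ?case by (simp add: block_length_def block_start_def)
qed

definition corner_9_9 :: "cell list list" where
 "corner_9_9 = [
  [(0,0,1,1), (0,1,1,1), (0,2,-1,4), (1,0,-1,1), (1,0,1,4), (1,1,1,4), (1,1,-1,3), (1,2,-1,1), (1,2,1,4)],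
  [(0,0,-1,4), (0,1,-1,3), (0,2,1,1), (1,0,1,3), (1,0,-1,2), (1,1,-1,2), (1,1,1,1), (1,2,1,3), (1,2,-1,2)],
  [(0,0,1,2), (0,2,-1,5), (0,1,1,4), (1,3,1,3), (1,3,-1,2), (1,4,-1,2), (1,4,1,4), (1,5,1,3), (1,5,-1,2)],
  [(0,1,1,5), (0,0,1,5), (0,2,-1,3), (1,3,-1,4), (1,3,1,1), (1,4,1,1), (1,4,-1,3), (1,5,-1,1), (1,5,1,4)],
  [(0,2,-1,2), (0,1,1,2), (0,0,1,3), (1,6,-1,1), (1,6,1,2), (1,7,-1,1), (1,7,1,3), (1,8,-1,3), (1,8,1,2)],
  [(0,8,-1,3), (0,6,-1,1), (0,8,1,5), (0,3,1,5), (0,3,-1,4), (0,3,1,1), (0,4,1,4), (0,5,-1,5), (0,6,1,3)],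
  [(0,6,-1,2), (0,6,1,5), (0,7,-1,2), (0,4,1,1), (0,4,-1,3), (0,5,-1,2), (0,3,1,2), (0,4,1,5), (0,7,1,1)],
  [(0,8,1,4), (0,7,-1,4), (0,7,1,3), (0,5,-1,4), (0,5,1,3), (0,4,1,2), (0,5,-1,1), (0,3,1,3), (0,8,-1,1)],
  [(0,6,1,4), (0,7,1,5), (0,8,-1,2), (1,6,1,3), (1,6,-1,4), (1,7,1,4), (1,7,-1,2), (1,8,1,1), (1,8,-1,4)]]"

definition corner_9_13 :: "cell list list" where
 "corner_9_13 = [
  [(0,1,-1,5), (0,2,1,2), (0,0,-1,1), (0,0,1,4), (0,0,-1,5), (0,9,-1,3), (0,10,-1,3), (0,11,1,1), (0,14,1,1), (0,13,-1,4), (0,12,-1,1), (1,0,-1,4), (1,0,1,3)],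
  [(0,2,1,4), (0,0,-1,2), (0,2,1,1), (0,2,-1,5), (0,1,-1,3), (0,11,1,4), (0,9,-1,5), (0,10,-1,2), (0,12,-1,5), (0,14,1,2), (0,13,-1,5), (1,0,1,2), (1,0,-1,1)],
  [(0,0,-1,3), (0,1,-1,4), (0,1,-1,2), (0,1,1,1), (0,2,1,3), (0,10,-1,5), (0,9,-1,4), (0,11,1,3), (0,12,-1,2), (0,13,-1,3), (0,14,1,3), (1,1,-1,3), (1,1,1,1)],
  [(0,4,-1,2), (0,5,1,1), (0,5,1,3), (0,3,-1,2), (0,5,-1,5), (0,10,1,1), (0,9,1,2), (0,11,-1,5), (0,13,-1,2), (0,12,-1,3), (0,14,1,5), (1,1,1,4), (1,1,-1,2)],
  [(0,5,1,4), (0,3,-1,5), (0,4,-1,5), (0,4,-1,3), (0,4,1,4), (0,10,-1,4), (0,11,1,2), (0,9,-1,1), (0,12,1,4), (0,13,1,1), (0,14,-1,4), (1,2,-1,1), (1,2,1,3)],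
  [(0,3,-1,3), (0,4,-1,1), (0,3,-1,4), (0,5,1,2), (0,3,1,1), (0,15,-1,5), (0,17,1,5), (0,17,-1,4), (0,18,-1,5), (0,20,1,4), (0,20,-1,2), (0,15,1,4), (0,18,1,3)],
  [(0,7,1,3), (0,8,-1,4), (0,7,1,2), (0,6,1,5), (0,7,-1,1), (0,16,-1,1), (0,16,1,3), (0,17,1,2), (0,18,1,1), (0,19,-1,1), (0,18,-1,4), (0,17,-1,3), (0,19,1,3)],
  [(0,8,-1,5), (0,6,1,3), (0,6,1,4), (0,7,1,4), (0,6,-1,1), (0,15,1,3), (0,16,-1,4), (0,15,-1,1), (0,19,-1,2), (0,19,1,4), (0,20,1,1), (0,16,1,2), (0,20,-1,3)],
  [(0,6,1,2), (0,7,1,5), (0,8,-1,3), (0,8,-1,1), (0,8,1,2), (0,16,1,5), (0,17,-1,1), (0,15,1,2), (0,19,1,5), (0,20,-1,5), (0,18,1,2), (1,2,1,4), (1,2,-1,2)]]"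

definition corner_13_9 :: "cell list list" where
 "corner_13_9 = [
  [(0,1,-1,5), (0,2,1,4), (0,0,-1,3), (0,4,-1,2), (0,5,1,4), (0,3,-1,3), (0,7,1,3), (0,8,-1,5), (0,6,1,2)],
  [(0,2,1,2), (0,0,-1,2), (0,1,-1,4), (0,5,1,1), (0,3,-1,5), (0,4,-1,1), (0,8,-1,4), (0,6,1,3), (0,7,1,5)],
  [(0,0,-1,1), (0,2,1,1), (0,1,-1,2), (0,5,1,3), (0,4,-1,5), (0,3,-1,4), (0,7,1,2), (0,6,1,4), (0,8,-1,3)],
  [(0,0,1,4), (0,2,-1,5), (0,1,1,1), (0,3,-1,2), (0,4,-1,3), (0,5,1,2), (0,6,1,5), (0,7,1,4), (0,8,-1,1)],
  [(0,0,-1,5), (0,1,-1,3), (0,2,1,3), (0,5,-1,5), (0,4,1,4), (0,3,1,1), (0,7,-1,1), (0,6,-1,1), (0,8,1,2)],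
  [(0,9,-1,3), (0,11,1,4), (0,10,-1,5), (0,10,1,1), (0,10,-1,4), (0,15,-1,5), (0,16,-1,1), (0,15,1,3), (0,16,1,5)],
  [(0,10,-1,3), (0,9,-1,5), (0,9,-1,4), (0,9,1,2), (0,11,1,2), (0,17,1,5), (0,16,1,3), (0,16,-1,4), (0,17,-1,1)],
  [(0,11,1,1), (0,10,-1,2), (0,11,1,3), (0,11,-1,5), (0,9,-1,1), (0,17,-1,4), (0,17,1,2), (0,15,-1,1), (0,15,1,2)],
  [(0,14,1,1), (0,12,-1,5), (0,12,-1,2), (0,13,-1,2), (0,12,1,4), (0,18,-1,5), (0,18,1,1), (0,19,-1,2), (0,19,1,5)],
  [(0,13,-1,4), (0,14,1,2), (0,13,-1,3), (0,12,-1,3), (0,13,1,1), (0,20,1,4), (0,19,-1,1), (0,19,1,4), (0,20,-1,5)],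
  [(0,12,-1,1), (0,13,-1,5), (0,14,1,3), (0,14,1,5), (0,14,-1,4), (0,20,-1,2), (0,18,-1,4), (0,20,1,1), (0,18,1,2)],
  [(1,0,-1,4), (1,0,1,2), (1,1,-1,3), (1,1,1,4), (1,2,-1,1), (0,15,1,4), (0,17,-1,3), (0,16,1,2), (1,2,1,4)],
  [(1,0,1,3), (1,0,-1,1), (1,1,1,1), (1,1,-1,2), (1,2,1,3), (0,18,1,3), (0,19,1,3), (0,20,-1,3), (1,2,-1,2)]]"

definition corner_13_13 :: "cell list list" where
 "corner_13_13 = [
  [(0,0,1,5), (0,1,1,3), (0,2,-1,5), (1,0,-1,3), (1,0,1,1), (1,1,1,3), (1,1,-1,2), (1,2,-1,4), (1,2,1,3), (1,3,-1,2), (1,3,1,4), (1,4,1,3), (1,4,-1,1)],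
  [(0,0,-1,3), (0,1,-1,1), (0,2,1,3), (1,0,1,2), (1,0,-1,4), (1,1,-1,1), (1,1,1,4), (1,2,1,1), (1,2,-1,2), (1,3,1,1), (1,3,-1,3), (1,4,-1,4), (1,4,1,2)],
  [(0,0,1,4), (0,2,-1,4), (0,1,1,5), (1,5,1,4), (1,5,-1,1), (1,6,-1,3), (1,6,1,1), (1,7,1,3), (1,7,-1,4), (1,8,-1,3), (1,8,1,4), (1,9,1,1), (1,9,-1,2)],
  [(0,1,1,2), (0,0,1,2), (0,2,-1,1), (1,5,-1,3), (1,5,1,2), (1,6,1,4), (1,6,-1,2), (1,7,-1,1), (1,7,1,2), (1,8,1,2), (1,8,-1,1), (1,9,-1,4), (1,9,1,3)],
  [(0,2,-1,2), (0,1,1,4), (0,0,1,1), (1,10,-1,4), (1,10,1,2), (1,11,-1,1), (1,11,1,2), (1,12,1,2), (1,13,1,3), (1,13,-1,1), (1,14,1,4), (1,12,-1,3), (1,14,-1,2)],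
  [(1,15,-1,2), (1,15,1,1), (1,16,1,3), (0,3,1,2), (0,3,-1,4), (0,3,1,3), (0,4,1,4), (0,5,-1,1), (1,13,-1,2), (1,13,1,4), (1,14,-1,3), (1,16,-1,1), (1,14,1,1)],
  [(1,15,1,3), (1,15,-1,4), (1,16,-1,2), (0,4,1,2), (0,4,-1,3), (0,5,-1,5), (0,3,1,1), (0,4,1,5), (1,17,1,4), (1,17,-1,2), (1,18,-1,2), (1,16,1,4), (1,18,1,4)],
  [(1,19,1,4), (1,19,-1,1), (1,20,1,1), (0,5,-1,2), (0,5,1,3), (0,4,1,1), (0,5,-1,4), (0,3,1,5), (1,17,-1,1), (1,17,1,3), (1,18,1,1), (1,20,-1,2), (1,18,-1,3)],
  [(1,19,-1,3), (1,19,1,2), (1,21,-1,2), (1,10,1,3), (1,10,-1,1), (1,11,1,3), (1,11,-1,4), (1,12,-1,4), (0,6,1,4), (0,7,1,5), (0,8,-1,2), (1,12,1,1), (1,21,1,3)],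
  [(1,22,-1,2), (1,22,1,4), (1,21,1,4), (1,23,-1,2), (1,23,1,1), (1,24,-1,1), (1,24,1,4), (1,25,1,1), (1,25,-1,4), (0,6,1,1), (0,7,1,1), (0,8,-1,1), (1,21,-1,1)],
  [(1,22,1,1), (1,22,-1,3), (1,26,-1,1), (1,23,1,4), (1,23,-1,3), (1,24,1,3), (1,24,-1,2), (1,25,-1,3), (1,25,1,2), (1,26,1,4), (0,6,1,3), (0,7,1,3), (0,8,-1,3)],
  [(1,27,-1,4), (1,27,1,3), (1,26,1,3), (1,28,1,4), (1,28,-1,1), (1,29,-1,3), (1,29,1,4), (1,30,1,2), (0,8,-1,4), (1,26,-1,2), (1,30,-1,4), (0,6,1,5), (0,7,1,2)],
  [(1,27,1,2), (1,27,-1,1), (1,20,-1,4), (1,28,-1,2), (1,28,1,3), (1,29,1,2), (1,29,-1,1), (1,30,-1,1), (0,7,1,4), (0,8,-1,5), (1,30,1,3), (1,20,1,3), (0,6,1,2)]]"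

definition top_strip_9 :: "cell list list" where
 "top_strip_9 = [
  [(0,0,-1,3), (0,1,-1,3), (0,2,1,1), (0,5,1,1), (0,4,-1,4), (0,3,-1,1), (1,0,-1,4), (1,0,1,3)],
  [(0,2,1,4), (0,0,-1,5), (0,1,-1,2), (0,3,-1,5), (0,5,1,2), (0,4,-1,5), (1,0,1,2), (1,0,-1,1)],
  [(0,1,-1,5), (0,0,-1,4), (0,2,1,3), (0,3,-1,2), (0,4,-1,3), (0,5,1,3), (1,1,-1,3), (1,1,1,1)],
  [(0,1,1,1), (0,0,1,2), (0,2,-1,5), (0,4,-1,2), (0,3,-1,3), (0,5,1,5), (1,1,1,4), (1,1,-1,2)],
  [(0,1,-1,4), (0,2,1,2), (0,0,-1,1), (0,3,1,4), (0,4,1,1), (0,5,-1,4), (1,2,-1,1), (1,2,1,3)],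
  [(0,6,-1,5), (0,8,1,5), (0,8,-1,4), (0,9,-1,5), (0,11,1,4), (0,11,-1,2), (0,6,1,4), (0,9,1,3)],
  [(0,7,-1,1), (0,7,1,3), (0,8,1,2), (0,9,1,1), (0,10,-1,1), (0,9,-1,4), (0,8,-1,3), (0,10,1,3)],
  [(0,6,1,3), (0,7,-1,4), (0,6,-1,1), (0,10,-1,2), (0,10,1,4), (0,11,1,1), (0,7,1,2), (0,11,-1,3)],
  [(0,7,1,5), (0,8,-1,1), (0,6,1,2), (0,10,1,5), (0,11,-1,5), (0,9,1,2), (1,2,1,4), (1,2,-1,2)]]"

definition top_strip_13 :: "cell list list" where
 "top_strip_13 = [
  [(0,0,-1,3), (0,1,-1,3), (0,2,1,1), (0,5,1,1), (0,4,-1,4), (0,3,-1,1), (1,0,-1,4), (1,0,1,3)],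
  [(0,2,1,4), (0,0,-1,5), (0,1,-1,2), (0,3,-1,5), (0,5,1,2), (0,4,-1,5), (1,0,1,2), (1,0,-1,1)],
  [(0,1,-1,5), (0,0,-1,4), (0,2,1,3), (0,3,-1,2), (0,4,-1,3), (0,5,1,3), (1,1,-1,3), (1,1,1,1)],
  [(0,1,1,1), (0,0,1,2), (0,2,-1,5), (0,4,-1,2), (0,3,-1,3), (0,5,1,5), (1,1,1,4), (1,1,-1,2)],
  [(0,1,-1,4), (0,2,1,2), (0,0,-1,1), (0,3,1,4), (0,4,1,1), (0,5,-1,4), (1,2,-1,1), (1,2,1,3)],
  [(0,6,-1,5), (0,8,1,5), (0,8,-1,4), (0,9,-1,5), (0,11,1,4), (0,11,-1,2), (0,6,1,4), (0,9,1,3)],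
  [(0,7,-1,1), (0,7,1,3), (0,8,1,2), (0,9,1,1), (0,10,-1,1), (0,9,-1,4), (0,8,-1,3), (0,10,1,3)],
  [(0,6,1,3), (0,7,-1,4), (0,6,-1,1), (0,10,-1,2), (0,10,1,4), (0,11,1,1), (0,7,1,2), (0,11,-1,3)],
  [(0,7,1,5), (0,8,-1,1), (0,6,1,2), (0,10,1,5), (0,11,-1,5), (0,9,1,2), (1,2,1,4), (1,2,-1,2)],
  [(1,3,1,1), (1,3,-1,2), (1,4,1,2), (1,4,-1,1), (1,7,1,1), (1,7,-1,2), (1,8,1,2), (1,8,-1,1)],
  [(1,3,-1,3), (1,3,1,4), (1,4,-1,4), (1,4,1,3), (1,7,-1,3), (1,7,1,4), (1,8,-1,4), (1,8,1,3)],
  [(1,5,1,3), (1,5,-1,4), (1,6,-1,1), (1,6,1,2), (1,9,1,3), (1,9,-1,4), (1,10,-1,1), (1,10,1,2)],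
  [(1,5,-1,1), (1,5,1,2), (1,6,1,3), (1,6,-1,4), (1,9,-1,1), (1,9,1,2), (1,10,1,3), (1,10,-1,4)]]"

definition left_strip_9 :: "cell list list" where
 "left_strip_9 = [
  [(0,0,-1,3), (0,2,1,4), (0,1,-1,5), (0,1,1,1), (0,1,-1,4), (0,6,-1,5), (0,7,-1,1), (0,6,1,3), (0,7,1,5)],
  [(0,1,-1,3), (0,0,-1,5), (0,0,-1,4), (0,0,1,2), (0,2,1,2), (0,8,1,5), (0,7,1,3), (0,7,-1,4), (0,8,-1,1)],
  [(0,2,1,1), (0,1,-1,2), (0,2,1,3), (0,2,-1,5), (0,0,-1,1), (0,8,-1,4), (0,8,1,2), (0,6,-1,1), (0,6,1,2)],
  [(0,5,1,1), (0,3,-1,5), (0,3,-1,2), (0,4,-1,2), (0,3,1,4), (0,9,-1,5), (0,9,1,1), (0,10,-1,2), (0,10,1,5)],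
  [(0,4,-1,4), (0,5,1,2), (0,4,-1,3), (0,3,-1,3), (0,4,1,1), (0,11,1,4), (0,10,-1,1), (0,10,1,4), (0,11,-1,5)],
  [(0,3,-1,1), (0,4,-1,5), (0,5,1,3), (0,5,1,5), (0,5,-1,4), (0,11,-1,2), (0,9,-1,4), (0,11,1,1), (0,9,1,2)],
  [(1,0,-1,4), (1,0,1,2), (1,1,-1,3), (1,1,1,4), (1,2,-1,1), (0,6,1,4), (0,8,-1,3), (0,7,1,2), (1,2,1,4)],
  [(1,0,1,3), (1,0,-1,1), (1,1,1,1), (1,1,-1,2), (1,2,1,3), (0,9,1,3), (0,10,1,3), (0,11,-1,3), (1,2,-1,2)]]"

definition left_strip_13 :: "cell list list" where
 "left_strip_13 = [
  [(0,0,-1,3), (0,2,1,4), (0,1,-1,5), (0,1,1,1), (0,1,-1,4), (0,6,-1,5), (0,7,-1,1), (0,6,1,3), (0,7,1,5), (1,3,1,1), (1,3,-1,2), (1,4,1,2), (1,4,-1,1)],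
  [(0,1,-1,3), (0,0,-1,5), (0,0,-1,4), (0,0,1,2), (0,2,1,2), (0,8,1,5), (0,7,1,3), (0,7,-1,4), (0,8,-1,1), (1,3,-1,3), (1,3,1,4), (1,4,-1,4), (1,4,1,3)],
  [(0,2,1,1), (0,1,-1,2), (0,2,1,3), (0,2,-1,5), (0,0,-1,1), (0,8,-1,4), (0,8,1,2), (0,6,-1,1), (0,6,1,2), (1,5,1,3), (1,5,-1,4), (1,6,-1,1), (1,6,1,2)],
  [(0,5,1,1), (0,3,-1,5), (0,3,-1,2), (0,4,-1,2), (0,3,1,4), (0,9,-1,5), (0,9,1,1), (0,10,-1,2), (0,10,1,5), (1,5,-1,1), (1,5,1,2), (1,6,1,3), (1,6,-1,4)],
  [(0,4,-1,4), (0,5,1,2), (0,4,-1,3), (0,3,-1,3), (0,4,1,1), (0,11,1,4), (0,10,-1,1), (0,10,1,4), (0,11,-1,5), (1,7,1,1), (1,7,-1,2), (1,8,1,2), (1,8,-1,1)],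
  [(0,3,-1,1), (0,4,-1,5), (0,5,1,3), (0,5,1,5), (0,5,-1,4), (0,11,-1,2), (0,9,-1,4), (0,11,1,1), (0,9,1,2), (1,7,-1,3), (1,7,1,4), (1,8,-1,4), (1,8,1,3)],
  [(1,0,-1,4), (1,0,1,2), (1,1,-1,3), (1,1,1,4), (1,2,-1,1), (0,6,1,4), (0,8,-1,3), (0,7,1,2), (1,2,1,4), (1,9,1,3), (1,9,-1,4), (1,10,-1,1), (1,10,1,2)],
  [(1,0,1,3), (1,0,-1,1), (1,1,1,1), (1,1,-1,2), (1,2,1,3), (0,9,1,3), (0,10,1,3), (0,11,-1,3), (1,2,-1,2), (1,9,-1,1), (1,9,1,2), (1,10,1,3), (1,10,-1,4)]]"

definition inner_block :: "cell list list" where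
 "inner_block = [
  [(1,0,1,1), (1,0,-1,2), (1,1,1,2), (1,1,-1,1), (1,4,1,1), (1,4,-1,2), (1,5,1,2), (1,5,-1,1)],
  [(1,0,-1,3), (1,0,1,4), (1,1,-1,4), (1,1,1,3), (1,4,-1,3), (1,4,1,4), (1,5,-1,4), (1,5,1,3)],
  [(1,2,1,3), (1,2,-1,4), (1,3,-1,1), (1,3,1,2), (1,6,1,3), (1,6,-1,4), (1,7,-1,1), (1,7,1,2)],
  [(1,2,-1,1), (1,2,1,2), (1,3,1,3), (1,3,-1,4), (1,6,-1,1), (1,6,1,2), (1,7,1,3), (1,7,-1,4)],
  [(1,8,1,1), (1,8,-1,2), (1,9,1,2), (1,9,-1,1), (1,12,1,1), (1,12,-1,2), (1,13,1,2), (1,13,-1,1)],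
  [(1,8,-1,3), (1,8,1,4), (1,9,-1,4), (1,9,1,3), (1,12,-1,3), (1,12,1,4), (1,13,-1,4), (1,13,1,3)],
  [(1,10,1,3), (1,10,-1,4), (1,11,-1,1), (1,11,1,2), (1,14,1,3), (1,14,-1,4), (1,15,-1,1), (1,15,1,2)],
  [(1,10,-1,1), (1,10,1,2), (1,11,1,3), (1,11,-1,4), (1,14,-1,1), (1,14,1,2), (1,15,1,3), (1,15,-1,4)]]"

lemma valid_corner_9_9: "valid_block 3 9 9 9 corner_9_9" by code_simp
lemma valid_corner_9_13: "valid_block 7 3 9 13 corner_9_13" by code_simp
lemma valid_corner_13_9: "valid_block 7 3 13 9 corner_13_9" by code_simp
lemma valid_corner_13_13: "valid_block 3 31 13 13 corner_13_13" by code_simp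
lemma valid_top_strip_9: "valid_block 4 3 9 8 top_strip_9" by code_simp
lemma valid_top_strip_13: "valid_block 4 11 13 8 top_strip_13" by code_simp
lemma valid_left_strip_9: "valid_block 4 3 8 9 left_strip_9" by code_simp
lemma valid_left_strip_13: "valid_block 4 11 8 13 left_strip_13" by code_simp
lemma valid_inner_block: "valid_block 0 16 8 8 inner_block" by code_simp

section \<open>The arrays\<close>

definition core_size :: "nat \<Rightarrow> nat" where
  "core_size m = (if m mod 8 = 1 then 9 else 13)"

definition strip_count :: "nat \<Rightarrow> nat" where
  "strip_count m = m div 8 - 1"

lemma core_size_cases: "core_size m = 9 \<or> core_size m = 13"
  by (simp add: core_size_def)

lemma core_strip_decomposition:
  assumes "m mod 4 = 1" and "9 \<le> m"
  shows "m = core_size m + 8 * strip_count m"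
proof -
  have r: "m mod 8 = 1 \<or> m mod 8 = 5" using assms(1) by presburger
  have "1 \<le> m div 8" using div_le_mono[of 8 m 8] assms(2) by simp
  then obtain d where d: "m div 8 = Suc d" by (cases "m div 8") auto
  have "m = 8 * d + 8 + m mod 8" using d div_mult_mod_eq[of m 8] by linarith
  with r show ?thesis unfolding core_size_def strip_count_def d by auto
qed

lemma block_index_le_strip_count:
  assumes "m mod 4 = 1" and "9 \<le> m" and "i < m"
  shows "block_index (core_size m) i \<le> strip_count m"
  using assms(3) core_strip_decomposition[OF assms(1,2)] by (intro block_index_le) simp

definition corner_block :: "nat \<Rightarrow> nat \<Rightarrow> cell list list" where
  "corner_block m n =
     (if core_size m = 9 then if core_size n = 9 then corner_9_9 else corner_9_13
      else if core_size n = 9 then corner_13_9 else corner_13_13)"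

definition top_block :: "nat \<Rightarrow> cell list list" where
  "top_block m = (if core_size m = 9 then top_strip_9 else top_strip_13)"

definition left_block :: "nat \<Rightarrow> cell list list" where
  "left_block n = (if core_size n = 9 then left_strip_9 else left_strip_13)"

definition block_table :: "nat \<Rightarrow> nat \<Rightarrow> nat \<Rightarrow> nat \<Rightarrow> cell list list" where
  "block_table m n I J =
     (if I = 0 then if J = 0 then corner_block m n else top_block m
      else if J = 0 then left_block n else inner_block)"

definition corner_triples :: "nat \<Rightarrow> nat \<Rightarrow> nat" where
  "corner_triples m n = (if core_size m = core_size n then 3 else 7)"

definition corner_quads :: "nat \<Rightarrow> nat \<Rightarrow> nat" where
  "corner_quads m n =
     (if core_size m = 9 then if core_size n = 9 then 9 else 3
      else if core_size n = 9 then 3 else 31)"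

definition strip_quads :: "nat \<Rightarrow> nat" where
  "strip_quads m = (if core_size m = 9 then 3 else 11)"

definition block_triples :: "nat \<Rightarrow> nat \<Rightarrow> nat \<Rightarrow> nat \<Rightarrow> nat" where
  "block_triples m n I J = (if I = 0 \<and> J = 0 then corner_triples m n else if I = 0 \<or> J = 0 then 4 else 0)"

definition block_quads :: "nat \<Rightarrow> nat \<Rightarrow> nat \<Rightarrow> nat \<Rightarrow> nat" where
  "block_quads m n I J =
     (if I = 0 then if J = 0 then corner_quads m n else strip_quads m
      else if J = 0 then strip_quads n else 16)"

lemma valid_block_table:
  "valid_block (block_triples m n I J) (block_quads m n I J)
     (block_length (core_size m) I) (block_length (core_size n) J) (block_table m n I J)"
  using core_size_cases[of m] core_size_cases[of n]
    valid_corner_9_9 valid_corner_9_13 valid_corner_13_9 valid_corner_13_13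
    valid_top_strip_9 valid_top_strip_13 valid_left_strip_9 valid_left_strip_13 valid_inner_block
  by (auto simp: block_triples_def block_quads_def block_length_def block_table_def corner_block_def
      top_block_def left_block_def corner_triples_def corner_quads_def strip_quads_def)

definition array_triples :: "nat \<Rightarrow> nat \<Rightarrow> nat" where
  "array_triples m n = corner_triples m n + 4 * (strip_count m + strip_count n)"

definition array_quads :: "nat \<Rightarrow> nat \<Rightarrow> nat" where
  "array_quads m n = corner_quads m n + strip_quads m * strip_count n + strip_quads n * strip_count m
     + 16 * strip_count m * strip_count n"

lemma array_cell_count:
  assumes "m mod 4 = 1" "9 \<le> m" "n mod 4 = 1" "9 \<le> n"
  shows "m * n = 15 * array_triples m n + 4 * array_quads m n"
proof -
  obtain g p h q where "core_size m = g" "strip_count m = p" "core_size n = h" "strip_count n = q"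
    by blast
  moreover from this have "m = g + 8 * p" "n = h + 8 * q"
    using core_strip_decomposition assms by blast+
  ultimately show ?thesis
    using core_size_cases[of m] core_size_cases[of n]
    by (auto simp: array_triples_def array_quads_def corner_triples_def corner_quads_def strip_quads_def
        algebra_simps)
qed

text \<open>Blocks are ordered corner, top strips, left strips, inner blocks, and receive consecutive
  ranges of triple slots and of quad slots in this order; \<open>triple_block\<close> and \<open>quad_block\<close> recover
  the block from a slot.\<close>

definition triple_offset :: "nat \<Rightarrow> nat \<Rightarrow> nat \<Rightarrow> nat \<Rightarrow> nat" where
  "triple_offset m n I J =
     (if I = 0 then if J = 0 then 0 else corner_triples m n + 4 * (J - 1)
      else if J = 0 then corner_triples m n + 4 * strip_count n + 4 * (I - 1) else 0)"

definition quad_offset :: "nat \<Rightarrow> nat \<Rightarrow> nat \<Rightarrow> nat \<Rightarrow> nat" where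
  "quad_offset m n I J =
     (if I = 0 then if J = 0 then 0 else corner_quads m n + strip_quads m * (J - 1)
      else if J = 0 then corner_quads m n + strip_quads m * strip_count n + strip_quads n * (I - 1)
      else corner_quads m n + strip_quads m * strip_count n + strip_quads n * strip_count m
        + 16 * ((I - 1) * strip_count n + (J - 1)))"

definition triple_block :: "nat \<Rightarrow> nat \<Rightarrow> nat \<Rightarrow> nat \<times> nat" where
  "triple_block m n w =
     (if w < 3 * corner_triples m n then (0, 0)
      else if w < 3 * corner_triples m n + 12 * strip_count n then (0, (w - 3 * corner_triples m n) div 12 + 1)
      else ((w - 3 * corner_triples m n - 12 * strip_count n) div 12 + 1, 0))"

definition quad_block :: "nat \<Rightarrow> nat \<Rightarrow> nat \<Rightarrow> nat \<times> nat" where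
  "quad_block m n w =
     (let a = corner_quads m n; b = a + strip_quads m * strip_count n; c = b + strip_quads n * strip_count m
      in if w < a then (0, 0)
         else if w < b then (0, (w - a) div strip_quads m + 1)
         else if w < c then ((w - b) div strip_quads n + 1, 0)
         else ((w - c) div 16 div strip_count n + 1, (w - c) div 16 mod strip_count n + 1))"

lemma triple_block_offset:
  assumes "I \<le> strip_count m" and "J \<le> strip_count n" and "x < 3 * block_triples m n I J"
  shows "triple_block m n (3 * triple_offset m n I J + x) = (I, J)"
proof -
  consider "I = 0" "J = 0" | "I = 0" "J \<noteq> 0" | "I \<noteq> 0" "J = 0"
    using assms(3) by (auto simp: block_triples_def split: if_splits)
  then show ?thesis
  proof cases
    case 1
    then show ?thesis using assms by (simp add: triple_block_def triple_offset_def block_triples_def)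
  next
    case 2
    then have "x < 12" "3 * triple_offset m n I J + x = 3 * corner_triples m n + (12 * (J - 1) + x)"
      using assms(3) by (simp_all add: block_triples_def triple_offset_def)
    moreover have "12 * (J - 1) + x < 12 * strip_count n" using calculation(1) assms(2) 2 by linarith
    ultimately show ?thesis using 2 by (simp add: triple_block_def)
  next
    case 3
    then have "x < 12"
      "3 * triple_offset m n I J + x = 3 * corner_triples m n + 12 * strip_count n + (12 * (I - 1) + x)"
      using assms(3) by (simp_all add: block_triples_def triple_offset_def)
    then show ?thesis using 3 by (simp add: triple_block_def)
  qed
qed

lemma quad_block_offset:
  assumes "I \<le> strip_count m" and "J \<le> strip_count n" and "x < block_quads m n I J"
  shows "quad_block m n (quad_offset m n I J + x) = (I, J)"
proof -
  let ?a = "corner_quads m n" and ?p = "strip_quads m" and ?q = "strip_quads n"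
  let ?b = "?a + ?p * strip_count n"
  let ?c = "?b + ?q * strip_count m"
  consider "I = 0" "J = 0" | "I = 0" "J \<noteq> 0" | "I \<noteq> 0" "J = 0" | "I \<noteq> 0" "J \<noteq> 0"
    by blast
  then show ?thesis
  proof cases
    case 1
    then show ?thesis using assms by (simp add: quad_block_def quad_offset_def block_quads_def)
  next
    case 2
    then have x: "x < ?p" using assms(3) by (simp add: block_quads_def)
    have "?p * (J - 1) + x < ?p * (J - 1) + ?p" using x by simp
    also have "\<dots> \<le> ?p * strip_count n"
      using 2 assms(2) by (metis Suc_pred' mult_Suc_right add.commute mult_le_mono2 not_gr_zero)
    finally have "?p * (J - 1) + x < ?p * strip_count n" .
    moreover have "(?p * (J - 1) + x) div ?p = J - 1" using x by simp
    ultimately show ?thesis using 2 by (simp add: quad_block_def quad_offset_def add.assoc)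
  next
    case 3
    then have x: "x < ?q" using assms(3) by (simp add: block_quads_def)
    have "?q * (I - 1) + x < ?q * (I - 1) + ?q" using x by simp
    also have "\<dots> \<le> ?q * strip_count m"
      using 3 assms(1) by (metis Suc_pred' mult_Suc_right add.commute mult_le_mono2 not_gr_zero)
    finally have "?q * (I - 1) + x < ?q * strip_count m" .
    moreover have "(?q * (I - 1) + x) div ?q = I - 1" using x by simp
    ultimately show ?thesis using 3 by (simp add: quad_block_def quad_offset_def add.assoc)
  next
    case 4
    then have x: "x < 16" using assms(3) by (simp add: block_quads_def)
    let ?g = "(I - 1) * strip_count n + (J - 1)"
    have w: "quad_offset m n I J + x = ?c + (16 * ?g + x)" using 4 by (simp add: quad_offset_def)
    have "(16 * ?g + x) div 16 = ?g" using x by simp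
    moreover have "J - 1 < strip_count n" using assms(2) 4 by linarith
    then have "?g div strip_count n = I - 1" and "?g mod strip_count n = J - 1" by simp_all
    ultimately show ?thesis unfolding w using 4 by (simp add: quad_block_def Let_def)
  qed
qed

lemma triple_offset_bound:
  assumes "I \<le> strip_count m" and "J \<le> strip_count n"
  shows "triple_offset m n I J + block_triples m n I J \<le> array_triples m n"
  using assms by (auto simp: triple_offset_def block_triples_def array_triples_def)

lemma quad_offset_bound:
  assumes "I \<le> strip_count m" and "J \<le> strip_count n"
  shows "quad_offset m n I J + block_quads m n I J \<le> array_quads m n"
proof -
  let ?p = "strip_count m" and ?q = "strip_count n"
  consider "I = 0" "J = 0" | "I = 0" "J \<noteq> 0" | "I \<noteq> 0" "J = 0" | "I \<noteq> 0" "J \<noteq> 0"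
    by blast
  then show ?thesis
  proof cases
    case 1
    then show ?thesis by (simp add: quad_offset_def block_quads_def array_quads_def)
  next
    case 2
    then have "strip_quads m * (J - 1) + strip_quads m \<le> strip_quads m * ?q"
      using assms(2) by (metis Suc_pred' mult_Suc_right add.commute mult_le_mono2 not_gr_zero)
    then show ?thesis using 2 by (simp add: quad_offset_def block_quads_def array_quads_def)
  next
    case 3
    then have "strip_quads n * (I - 1) + strip_quads n \<le> strip_quads n * ?p"
      using assms(1) by (metis Suc_pred' mult_Suc_right add.commute mult_le_mono2 not_gr_zero)
    then show ?thesis using 3 by (simp add: quad_offset_def block_quads_def array_quads_def)
  next
    case 4
    have "I - 1 < ?p" "J - 1 < ?q" using assms 4 by linarith+
    then have "(I - 1) * ?q + (J - 1) < ?p * ?q" by (rule mult_add_less_mult)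
    then have "16 * ((I - 1) * ?q + (J - 1) + 1) \<le> 16 * (?p * ?q)" by (intro mult_le_mono2) simp
    then show ?thesis using 4 by (simp add: quad_offset_def block_quads_def array_quads_def mult.assoc)
  qed
qed

definition array_cell :: "nat \<Rightarrow> nat \<Rightarrow> nat \<Rightarrow> nat \<Rightarrow> cell" where
  "array_cell m n i j =
     block_table m n (block_index (core_size m) i) (block_index (core_size n) j)
       ! block_offset (core_size m) i ! block_offset (core_size n) j"

definition slot_offset :: "nat \<Rightarrow> nat \<Rightarrow> nat \<Rightarrow> nat \<Rightarrow> nat \<Rightarrow> nat" where
  "slot_offset m n I J t = (if t = 0 then 3 * triple_offset m n I J else quad_offset m n I J)"

definition block_base :: "nat \<Rightarrow> nat \<Rightarrow> nat \<Rightarrow> nat \<Rightarrow> nat \<Rightarrow> nat \<Rightarrow> nat \<Rightarrow> nat \<Rightarrow> nat" where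
  "block_base m n c k I J t x =
     base_value c (array_triples m n) (array_quads m n) k t (slot_offset m n I J t + x)"

definition heffter_array :: "nat \<Rightarrow> nat \<Rightarrow> nat \<Rightarrow> nat \<Rightarrow> nat \<Rightarrow> nat \<Rightarrow> int" where
  "heffter_array m n c k i j =
     cell_value (block_base m n c k (block_index (core_size m) i) (block_index (core_size n) j))
       (array_cell m n i j)"

definition array_label :: "nat \<Rightarrow> nat \<Rightarrow> nat \<Rightarrow> nat \<Rightarrow> nat \<times> nat \<times> nat" where
  "array_label m n i j = (case array_cell m n i j of (t, x, s, v) \<Rightarrow>
     (t, slot_offset m n (block_index (core_size m) i) (block_index (core_size n) j) t + x, v))"

lemma block_base_triple_step:
  "block_base m n c k I J 0 (3 * u + 2) = block_base m n c k I J 0 (3 * u) + block_base m n c k I J 0 (3 * u + 1) + 5"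
  using base_value_triple_step[of c "array_triples m n" "array_quads m n" k "triple_offset m n I J + u"]
  by (simp add: block_base_def slot_offset_def algebra_simps)

lemma heffter_array_row_sum:
  assumes "n mod 4 = 1" and "9 \<le> n"
  shows "(\<Sum>j<n. heffter_array m n c k i j) = 0"
proof -
  let ?h = "core_size n" and ?I = "block_index (core_size m) i" and ?li = "block_offset (core_size m) i"
  have "(\<Sum>j<n. heffter_array m n c k i j)
      = (\<Sum>J\<le>strip_count n. \<Sum>y<block_length ?h J. heffter_array m n c k i (block_start ?h J + y))"
    by (rule sum_blocks[OF core_strip_decomposition[OF assms]])
  also have "\<dots> = 0"
  proof (rule sum.neutral, rule ballI)
    fix J assume "J \<in> {..strip_count n}"
    note row = valid_block_row[OF valid_block_table[of m n ?I J] block_offset_less[of "core_size m" i]]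
    show "(\<Sum>y<block_length ?h J. heffter_array m n c k i (block_start ?h J + y)) = 0"
      by (rule sum_balanced_line_eq_0[where B = "block_base m n c k ?I J", OF row _ block_base_triple_step])
        (simp add: heffter_array_def array_cell_def block_index_offset_start)
  qed
  finally show ?thesis .
qed

lemma heffter_array_column_sum:
  assumes "m mod 4 = 1" and "9 \<le> m"
  shows "(\<Sum>i<m. heffter_array m n c k i j) = 0"
proof -
  let ?h = "core_size m" and ?J = "block_index (core_size n) j" and ?lj = "block_offset (core_size n) j"
  have "(\<Sum>i<m. heffter_array m n c k i j)
      = (\<Sum>I\<le>strip_count m. \<Sum>y<block_length ?h I. heffter_array m n c k (block_start ?h I + y) j)"
    by (rule sum_blocks[OF core_strip_decomposition[OF assms]])
  also have "\<dots> = 0"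
  proof (rule sum.neutral, rule ballI)
    fix I assume "I \<in> {..strip_count m}"
    note column = valid_block_column[OF valid_block_table[of m n I ?J] block_offset_less[of "core_size n" j]]
    show "(\<Sum>y<block_length ?h I. heffter_array m n c k (block_start ?h I + y) j) = 0"
      by (rule sum_balanced_line_eq_0[where B = "block_base m n c k I ?J", OF column(1) _ _ block_base_triple_step])
        (use column(2) in \<open>simp_all add: heffter_array_def array_cell_def block_index_offset_start\<close>)
  qed
  finally show ?thesis .
qed

lemma admissible_array_cell:
  "admissible_cell (block_triples m n (block_index (core_size m) i) (block_index (core_size n) j))
     (block_quads m n (block_index (core_size m) i) (block_index (core_size n) j)) (array_cell m n i j)"
  unfolding array_cell_def by (rule valid_block_admissible[OF valid_block_table block_offset_less block_offset_less])

lemma abs_heffter_array: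
  "\<bar>heffter_array m n c k i j\<bar> = int (label_value c (array_triples m n) (array_quads m n) (k, array_label m n i j))"
  using admissible_array_cell[of m n i j]
  by (cases "array_cell m n i j")
    (auto simp: heffter_array_def array_label_def cell_value_def block_base_def label_value_def
      admissible_cell_def abs_mult)

definition label_block :: "nat \<Rightarrow> nat \<Rightarrow> nat \<times> nat \<times> nat \<Rightarrow> nat \<times> nat" where
  "label_block m n = (\<lambda>(t, w, v). if t = 0 then triple_block m n w else quad_block m n w)"

context
  fixes m n :: nat
  assumes m: "m mod 4 = 1" "9 \<le> m" and n: "n mod 4 = 1" "9 \<le> n"
begin

lemma label_block_array_label:
  assumes "i < m" and "j < n"
  shows "label_block m n (array_label m n i j) = (block_index (core_size m) i, block_index (core_size n) j)"
proof -
  let ?I = "block_index (core_size m) i" and ?J = "block_index (core_size n) j"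
  have I: "?I \<le> strip_count m" and J: "?J \<le> strip_count n"
    using block_index_le_strip_count m n assms by blast+
  show ?thesis
    using admissible_array_cell[of m n i j] triple_block_offset[OF I J] quad_block_offset[OF I J]
    by (cases "array_cell m n i j") (auto simp: label_block_def array_label_def slot_offset_def admissible_cell_def)
qed

lemma inj_on_array_label: "inj_on (\<lambda>(i, j). array_label m n i j) ({..<m} \<times> {..<n})"
proof (rule inj_onI, clarify)
  fix i1 j1 i2 j2
  assume bounds: "i1 < m" "j1 < n" "i2 < m" "j2 < n" and eq: "array_label m n i1 j1 = array_label m n i2 j2"
  let ?I = "block_index (core_size m) i1" and ?J = "block_index (core_size n) j1"
  let ?B = "block_table m n ?I ?J"
  have blocks: "block_index (core_size m) i2 = ?I" "block_index (core_size n) j2 = ?J"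
    using label_block_array_label[of i1 j1] label_block_array_label[of i2 j2] bounds eq by simp_all
  have "cell_label (?B ! block_offset (core_size m) i1 ! block_offset (core_size n) j1)
      = cell_label (?B ! block_offset (core_size m) i2 ! block_offset (core_size n) j2)"
    using eq blocks
    by (auto simp: array_label_def array_cell_def cell_label_def split: prod.splits)
  moreover note inj_onD[OF valid_block_inj_on_label[OF valid_block_table[of m n ?I ?J]]]
  ultimately have "block_offset (core_size m) i1 = block_offset (core_size m) i2"
    "block_offset (core_size n) j1 = block_offset (core_size n) j2"
    using block_offset_less[of "core_size m" i1] block_offset_less[of "core_size m" i2]
      block_offset_less[of "core_size n" j1] block_offset_less[of "core_size n" j2] blocks
    by auto
  then show "i1 = i2 \<and> j1 = j2"
    using blocks block_start_index_offset by metis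
qed

lemma array_label_mem_label_set:
  assumes "k < c" and "i < m" and "j < n"
  shows "(k, array_label m n i j) \<in> label_set c (array_triples m n) (array_quads m n)"
proof -
  let ?I = "block_index (core_size m) i" and ?J = "block_index (core_size n) j"
  have I: "?I \<le> strip_count m" and J: "?J \<le> strip_count n"
    using block_index_le_strip_count m n assms by blast+
  show ?thesis
    using admissible_array_cell[of m n i j] triple_offset_bound[OF I J] quad_offset_bound[OF I J] assms(1)
    by (cases "array_cell m n i j") (auto simp: label_set_def array_label_def slot_offset_def admissible_cell_def)
qed

end

lemma bij_betw_interval_if_inj_on:
  assumes "finite D" and "inj_on f D" and "f ` D \<subseteq> {1..int N}" and "card D = N"
  shows "bij_betw f D {1..int N}"
proof -
  have "card (f ` D) = card {1..int N}"
    using card_image[OF assms(2)] assms(4) by simp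
  then have "f ` D = {1..int N}"
    using card_subset_eq[OF _ assms(3)] by simp
  then show ?thesis
    using assms(2) by (simp add: bij_betw_def)
qed

lemma heffter_array_abs_bij:
  assumes "c > 0" and "c mod 4 = 0" and m: "m mod 4 = 1" "9 \<le> m" and n: "n mod 4 = 1" "9 \<le> n"
  shows "bij_betw (\<lambda>(k, i, j). \<bar>heffter_array m n c k i j\<bar>) ({..<c} \<times> {..<m} \<times> {..<n}) {1..int (m * n * c)}"
proof -
  let ?T = "array_triples m n" and ?R = "array_quads m n"
  let ?label = "\<lambda>(k, i, j). (k, array_label m n i j)"
  let ?D = "{..<c} \<times> {..<m} \<times> {..<n}"
  let ?f = "\<lambda>x. int (label_value c ?T ?R (?label x))"
  have "4 dvd c" using assms(2) by presburger
  then have dvd: "4 dvd c * ?T" by simp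
  have "4 * 3 \<le> c * ?T"
    using dvd_imp_le[OF \<open>4 dvd c\<close> assms(1)]
    by (intro mult_le_mono) (auto simp: array_triples_def corner_triples_def)
  then have large: "8 \<le> c * ?T" by simp
  have labels: "?label ` ?D \<subseteq> label_set c ?T ?R"
    using array_label_mem_label_set[OF m n] by auto
  have "inj_on ?label ?D"
    using inj_on_array_label[OF m n] by (auto simp: inj_on_def)
  then have "inj_on (label_value c ?T ?R \<circ> ?label) ?D"
    using inj_on_subset[OF inj_on_label_value[OF dvd large] labels] by (rule comp_inj_on)
  then have "inj_on ?f ?D" by (simp add: inj_on_def)
  moreover have "?f ` ?D \<subseteq> {1..int (m * n * c)}"
  proof (rule image_subsetI)
    fix x assume "x \<in> ?D"
    then have "?label x \<in> label_set c ?T ?R" using labels by blast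
    moreover have "15 * c * ?T + 4 * c * ?R = m * n * c"
      using array_cell_count[OF m n] by (simp add: algebra_simps)
    ultimately have "label_value c ?T ?R (?label x) \<in> {1..m * n * c}"
      using label_value_range[OF dvd large] by metis
    then show "?f x \<in> {1..int (m * n * c)}" by (auto simp del: of_nat_mult)
  qed
  ultimately show ?thesis
    by (intro bij_betw_interval_if_inj_on) (auto simp: abs_heffter_array card_cartesian_product split_def)
qed

theorem proposition3p2:
  fixes m n c :: nat
  assumes "c > 0" and "c mod 4 = 0"
    and "m mod 4 = 1" and "n mod 4 = 1"
    and "m \<ge> 9" and "n \<ge> 9"
  shows "\<exists>A. IHS m n c A"
proof -
  have "IHS m n c (heffter_array m n c)"
    using heffter_array_abs_bij[OF assms(1,2,3,5,4,6)]
      heffter_array_row_sum[OF assms(4,6)] heffter_array_column_sum[OF assms(3,5)]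
    by (simp add: IHS_def)
  then show ?thesis by blast
qed

end
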